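(* Let $\rho$ be a representation of $32_{65}$ over a set $U$. Then the graph on $U$ whose edges are the pairs $\{x,y\}$ with $(x,y)\in\rho(a)$ contains a clique of size $6$.
   Context: $32_{65}$ is the finite integral symmetric relation algebra with atoms $1'$, $a$, $b$, $c$, all symmetric, in which a diversity cycle $xyz$ (with $x,y,z\in\{a,b,c\}$) is mandatory (i.e. $x;y\ge z$) if it involves $a$ and forbidden (i.e. $x;y\cdot z=0$) otherwise. A representation over a set $U$ is an embedding $\rho$ into the full relation algebra $\langle\mathcal P(U\times U),\cup,{}^c,\circ,{}^{-1},\mathrm{Id}_U\rangle$. *)

theory Defs
  imports Main
begin

text \<open>The finite integral symmetric relation algebra 32_65.  It is atomic with
atoms Id', a, b, c; its elements are the sets of atoms (joins of atoms).\<close>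

datatype atom = Ident | Aa | Ba | Ca

type_synonym ra32_65 = "atom set"

text \<open>For diversity atoms x, y:
x;y contains Ident iff x = y (all atoms are symmetric), and contains the
diversity atom z iff the cycle xyz is mandatory, i.e. iff it involves a;
cycles not involving a are forbidden.\<close>

fun is_div :: "atom \<Rightarrow> bool" where
  "is_div Ident = False"
| "is_div _ = True"

definition atom_comp :: "atom \<Rightarrow> atom \<Rightarrow> atom set" where
  "atom_comp x y =
     (if x = Ident then {y}
      else if y = Ident then {x}
      else {z. (z = Ident \<and> x = y) \<or> (is_div z \<and> Aa \<in> {x, y, z})})"

definition ra_comp :: "ra32_65 \<Rightarrow> ra32_65 \<Rightarrow> ra32_65" where
  "ra_comp X Y = (\<Union>x\<in>X. \<Union>y\<in>Y. atom_comp x y)"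

text \<open>Converse: every atom is symmetric, so converse is the identity map.\<close>
definition ra_conv :: "ra32_65 \<Rightarrow> ra32_65" where
  "ra_conv X = X"

definition ra_one :: ra32_65 where
  "ra_one = {Ident}"

definition representation :: "'u set \<Rightarrow> (ra32_65 \<Rightarrow> ('u \<times> 'u) set) \<Rightarrow> bool" where
  "representation U \<rho> \<longleftrightarrow>
     inj \<rho>
   \<and> (\<forall>X. \<rho> X \<subseteq> U \<times> U)
   \<and> (\<forall>X Y. \<rho> (X \<union> Y) = \<rho> X \<union> \<rho> Y)
   \<and> (\<forall>X. \<rho> (- X) = (U \<times> U) - \<rho> X)
   \<and> (\<forall>X Y. \<rho> (ra_comp X Y) = \<rho> X O \<rho> Y)
   \<and> (\<forall>X. \<rho> (ra_conv X) = (\<rho> X)\<inverse>)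
   \<and> \<rho> ra_one = Id_on U"

end

theory Submission
  imports Defs
begin

text \<open>Write \<open>A, B, C\<close> for the images of the atoms \<open>a, b, c\<close>, and \<open>N x\<close> for the set of
\<open>B \<union> C\<close>-neighbours of \<open>x\<close>. As \<open>(b + c);(b + c) = 1' + a\<close>, every \<open>N x\<close> is an \<open>A\<close>-clique,
and \<open>N w\<close>, \<open>N v\<close> are disjoint when \<open>w B v\<close>. As \<open>a \<le> b;b, c;c, b;c\<close>, two \<open>A\<close>-related
points have three common neighbours (reached by \<open>B B\<close>, \<open>C C\<close> and \<open>B C\<close>). As \<open>a \<le> a;b\<close>
and \<open>a \<noteq> 0\<close>, there are \<open>x, w, v\<close> with \<open>x A w\<close>, \<open>x A v\<close> and \<open>w B v\<close>; then \<open>N x\<close>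
contains the three common neighbours of \<open>x, w\<close> and the three of \<open>x, v\<close>, six points
in all.\<close>

lemma Aa_in_ra_comp_div:
  assumes "is_div x" "is_div y"
  shows "Aa \<in> ra_comp {x} {y}"
  using assms unfolding ra_comp_def atom_comp_def by auto

lemma ra_comp_Ba_Ca_Ba_Ca: "ra_comp {Ba, Ca} {Ba, Ca} = {Ident, Aa}"
  unfolding ra_comp_def atom_comp_def by (auto elim: is_div.elims)

locale rep_32_65 =
  fixes U :: "'u set" and \<rho> :: "ra32_65 \<Rightarrow> ('u \<times> 'u) set"
  assumes representation: "representation U \<rho>"
begin

lemma rep_union: "\<rho> (X \<union> Y) = \<rho> X \<union> \<rho> Y"
  using representation unfolding representation_def by simp

lemma rep_compl: "\<rho> (- X) = U \<times> U - \<rho> X"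
  using representation unfolding representation_def by simp

lemma rep_subset: "\<rho> X \<subseteq> U \<times> U"
  using representation unfolding representation_def by simp

lemma rep_comp: "\<rho> (ra_comp X Y) = \<rho> X O \<rho> Y"
  using representation unfolding representation_def by simp

lemma rep_Ident: "\<rho> {Ident} = Id_on U"
  using representation unfolding representation_def ra_one_def by simp

lemma rep_sym: "(x, y) \<in> \<rho> X \<Longrightarrow> (y, x) \<in> \<rho> X"
  using representation unfolding representation_def ra_conv_def by (metis converse_iff)

lemma rep_mono: "X \<subseteq> Y \<Longrightarrow> \<rho> X \<subseteq> \<rho> Y"
  using rep_union[of X Y] by (simp add: Un_absorb1 sup.absorb_iff2)

lemma rep_empty: "\<rho> {} = {}"
proof -
  have "\<rho> UNIV = U \<times> U"
    using rep_union[of "{}" "- {}"] rep_compl[of "{}"] rep_subset[of "{}"] by auto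
  then show ?thesis
    using rep_compl[of UNIV] by simp
qed

lemma rep_atom_nonempty: "\<rho> {p} \<noteq> {}"
proof -
  have "inj \<rho>"
    using representation unfolding representation_def by simp
  then show ?thesis
    using rep_empty by (metis injD insert_not_empty)
qed

lemma rep_atoms_disjoint: "p \<noteq> q \<Longrightarrow> \<rho> {p} \<inter> \<rho> {q} = {}"
  using rep_mono[of "{q}" "- {p}"] rep_compl[of "{p}"] by blast

lemma rep_mandatory: "z \<in> ra_comp X Y \<Longrightarrow> \<rho> {z} \<subseteq> \<rho> X O \<rho> Y"
  using rep_mono[of "{z}" "ra_comp X Y"] by (simp add: rep_comp)

lemma rep_Aa_subset_relcomp_div: "is_div x \<Longrightarrow> is_div y \<Longrightarrow> \<rho> {Aa} \<subseteq> \<rho> {x} O \<rho> {y}"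
  by (simp add: Aa_in_ra_comp_div rep_mandatory)

lemma rep_Ba_Ca: "\<rho> {Ba, Ca} = \<rho> {Ba} \<union> \<rho> {Ca}"
  unfolding insert_is_Un[of Ba "{Ca}"] by (rule rep_union)

definition nbhd :: "'u \<Rightarrow> 'u set" where
  "nbhd x = {z. (x, z) \<in> \<rho> {Ba, Ca}}"

lemma nbhd_subset: "nbhd x \<subseteq> U"
  unfolding nbhd_def using rep_subset by blast

lemma nbhd_clique:
  assumes "p \<in> nbhd x" "q \<in> nbhd x" "p \<noteq> q"
  shows "(p, q) \<in> \<rho> {Aa}"
proof -
  have "(p, q) \<in> \<rho> {Ba, Ca} O \<rho> {Ba, Ca}"
    using assms(1,2) rep_sym unfolding nbhd_def by blast
  then have "(p, q) \<in> Id_on U \<union> \<rho> {Aa}"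
    using rep_comp[of "{Ba, Ca}" "{Ba, Ca}"] rep_union[of "{Ident}" "{Aa}"]
    by (simp add: ra_comp_Ba_Ca_Ba_Ca rep_Ident insert_commute)
  with assms(3) show ?thesis by blast
qed

lemma nbhd_disjoint_if_Ba:
  assumes "(w, v) \<in> \<rho> {Ba}"
  shows "nbhd w \<inter> nbhd v = {}"
proof -
  have "(w, v) \<notin> \<rho> {Aa}" "w \<noteq> v"
    using assms rep_atoms_disjoint[of Aa Ba] rep_atoms_disjoint[of Ident Ba] rep_Ident
      rep_subset[of "{Ba}"] by blast+
  with nbhd_clique show ?thesis
    unfolding nbhd_def using rep_sym by blast
qed

lemma common_nbhd_three:
  assumes "(x, w) \<in> \<rho> {Aa}"
  obtains T where "T \<subseteq> nbhd x \<inter> nbhd w" "card T = 3"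
proof -
  have "(x, w) \<in> \<rho> {Ba} O \<rho> {Ba}" "(x, w) \<in> \<rho> {Ca} O \<rho> {Ca}"
    "(x, w) \<in> \<rho> {Ba} O \<rho> {Ca}"
    using assms rep_Aa_subset_relcomp_div[of Ba Ba] rep_Aa_subset_relcomp_div[of Ca Ca]
      rep_Aa_subset_relcomp_div[of Ba Ca] by auto
  then obtain z1 z2 z3 where
    z1: "(x, z1) \<in> \<rho> {Ba}" "(z1, w) \<in> \<rho> {Ba}" and
    z2: "(x, z2) \<in> \<rho> {Ca}" "(z2, w) \<in> \<rho> {Ca}" and
    z3: "(x, z3) \<in> \<rho> {Ba}" "(z3, w) \<in> \<rho> {Ca}"
    by (elim relcompE) blast
  have "z1 \<noteq> z2" "z1 \<noteq> z3" "z2 \<noteq> z3"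
    using z1 z2 z3 rep_atoms_disjoint[of Ba Ca] by blast+
  then have "card {z1, z2, z3} = 3"
    by simp
  moreover have "{z1, z2, z3} \<subseteq> nbhd x \<inter> nbhd w"
    using z1 z2 z3 rep_sym unfolding nbhd_def rep_Ba_Ca by blast
  ultimately show thesis
    using that by blast
qed

lemma exists_Aa_Aa_Ba_triangle: "\<exists>x w v. (x, w) \<in> \<rho> {Aa} \<and> (x, v) \<in> \<rho> {Aa} \<and> (w, v) \<in> \<rho> {Ba}"
proof -
  obtain x v where "(x, v) \<in> \<rho> {Aa}"
    using rep_atom_nonempty[of Aa] by auto
  moreover have "\<rho> {Aa} \<subseteq> \<rho> {Aa} O \<rho> {Ba}"
    by (simp add: rep_Aa_subset_relcomp_div)
  ultimately show ?thesis
    by blast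
qed

end

theorem mainTheorem11:
  fixes U :: "'u set" and \<rho> :: "ra32_65 \<Rightarrow> ('u \<times> 'u) set"
  assumes "representation U \<rho>"
  shows "\<exists>S \<subseteq> U. card S = 6 \<and> (\<forall>x\<in>S. \<forall>y\<in>S. x \<noteq> y \<longrightarrow> (x, y) \<in> \<rho> {Aa})"
proof -
  interpret rep_32_65 U \<rho>
    by unfold_locales (fact assms)
  obtain x w v where "(x, w) \<in> \<rho> {Aa}" "(x, v) \<in> \<rho> {Aa}" "(w, v) \<in> \<rho> {Ba}"
    using exists_Aa_Aa_Ba_triangle by blast
  moreover obtain T1 where T1: "T1 \<subseteq> nbhd x \<inter> nbhd w" "card T1 = 3"
    using common_nbhd_three \<open>(x, w) \<in> \<rho> {Aa}\<close> by blast
  moreover obtain T2 where T2: "T2 \<subseteq> nbhd x \<inter> nbhd v" "card T2 = 3"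
    using common_nbhd_three \<open>(x, v) \<in> \<rho> {Aa}\<close> by blast
  ultimately have "T1 \<inter> T2 = {}"
    using nbhd_disjoint_if_Ba by blast
  then have "card (T1 \<union> T2) = 6"
    using T1 T2 by (simp add: card_Un_disjoint card_ge_0_finite)
  moreover have "T1 \<union> T2 \<subseteq> nbhd x"
    using T1 T2 by blast
  ultimately show ?thesis
    using nbhd_subset[of x] nbhd_clique[of _ x] by (intro exI[of _ "T1 \<union> T2"]) blast
qed

end
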